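(* For real $p\neq 0$, the inequality $\left( \frac{\tanh x}{x}\right) ^{p}<\frac{2}{3}\left( \frac{x}{\sinh x}\right) ^{3p}+\frac{1}{3}$ holds for all $x\in(0,\infty)$ if and only if $p<0$ or $p\geq 12/5$. *)

theory Defs
  imports Complex_Main
begin

end

theory Submission
  imports Defs "HOL-Analysis.Convex" "HOL-Real_Asymp.Real_Asymp"
begin

text \<open>Lazarevic's inequality \<open>cosh x < (sinh x / x)^3\<close> settles \<open>p < 0\<close>: with
  \<open>v = (x / sinh x) powr p > 1\<close> it gives \<open>(tanh x / x) powr p \<le> v^2 < (2 v^3 + 1) / 3\<close>.
  For \<open>0 < p < 12/5\<close> the inequality fails near \<open>0\<close>, since the difference of its two sides
  is \<open>p (p - 12/5) x^4 / 36 + o(x^4)\<close>. For \<open>p \<ge> 12/5\<close> it follows from the case \<open>p = 12/5\<close>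
  by convexity of \<open>t \<mapsto> t powr (5p/12)\<close>.

  After taking logarithms, the case \<open>p = 12/5\<close> says \<open>H > 0\<close>, where \<open>H(0+) = 0\<close> and \<open>H'\<close>
  has the sign of \<open>(sinh x / x) powr (36/5) Q - 2 A\<close> with \<open>Q = cosh x sinh x - x\<close> and
  \<open>A = 4x + 3x sinh\<^sup>2 x - 4 sinh x cosh x\<close>. That is positive because
  \<open>G = 36/5 ln (sinh x / x) - ln (2A) + ln Q\<close> also vanishes at \<open>0+\<close> and is increasing.
  Each hyperbolic inequality met on the way is proved by writing the function as a combination
  of terms \<open>x^j sinh (k x)\<close> and \<open>x^j cosh (k x)\<close> with nonnegative Maclaurin coefficients.\<close>

lemma fact_add_eq_fact_mult_pochhammer:
  "fact (m + j) = (fact m :: 'a::{semiring_char_0,comm_semiring_1}) * pochhammer (of_nat m + 1) j"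
  unfolding pochhammer_fact pochhammer_product' by (simp add: add.commute)

text \<open>A triple \<open>(j, k, a)\<close> stands for \<open>a x\<^sup>j sinh (k x)\<close> if \<open>j\<close> is even and for
  \<open>a x\<^sup>j cosh (k x)\<close> if \<open>j\<close> is odd. Every such term is an odd function of \<open>x\<close>;
  \<open>odd_hyp_coeff L\<close> lists the Maclaurin coefficients of the sum.\<close>

definition odd_hyp_poly :: "(nat \<times> real \<times> real) list \<Rightarrow> real \<Rightarrow> real" where
  "odd_hyp_poly L x = (\<Sum>(j,k,a)\<leftarrow>L. a * x^j * (if even j then sinh (k*x) else cosh (k*x)))"

definition odd_hyp_coeff :: "(nat \<times> real \<times> real) list \<Rightarrow> nat \<Rightarrow> real" where
  "odd_hyp_coeff L n =
     (if odd n then (\<Sum>(j,k,a)\<leftarrow>L. if j \<le> n then a * k^(n-j) / fact (n-j) else 0) else 0)"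

lemma odd_hyp_poly_Cons: "odd_hyp_poly (t # L) x = odd_hyp_poly [t] x + odd_hyp_poly L x"
  by (cases t) (simp add: odd_hyp_poly_def)

lemma odd_hyp_coeff_Cons: "odd_hyp_coeff (t # L) n = odd_hyp_coeff [t] n + odd_hyp_coeff L n"
  by (cases t) (simp add: odd_hyp_coeff_def)

lemma odd_hyp_poly_single_sums: "(\<lambda>n. odd_hyp_coeff [t] n * x^n) sums odd_hyp_poly [t] x"
proof -
  obtain j k a where t: "t = (j, k, a)" by (cases t)
  let ?f = "\<lambda>n. odd_hyp_coeff [t] n * x^n"
  have "(\<lambda>i. a * x^j * (if odd (i + j) then (k*x)^i /\<^sub>R fact i else 0)) sums odd_hyp_poly [t] x"
  proof (cases "even j")
    case True
    have "(\<lambda>i. a * x^j * (if odd (i + j) then (k*x)^i /\<^sub>R fact i else 0))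
        = (\<lambda>i. a * x^j * (if even i then 0 else (k*x)^i /\<^sub>R fact i))"
      using True by auto
    then show ?thesis
      using True sums_mult[OF sinh_converges, of "a * x^j" "k*x"] by (simp add: t odd_hyp_poly_def)
  next
    case False
    have "(\<lambda>i. a * x^j * (if odd (i + j) then (k*x)^i /\<^sub>R fact i else 0))
        = (\<lambda>i. a * x^j * (if even i then (k*x)^i /\<^sub>R fact i else 0))"
      using False by auto
    then show ?thesis
      using False sums_mult[OF cosh_converges, of "a * x^j" "k*x"] by (simp add: t odd_hyp_poly_def)
  qed
  also have "(\<lambda>i. a * x^j * (if odd (i + j) then (k*x)^i /\<^sub>R fact i else 0)) = (\<lambda>i. ?f (i + j))"
    by (auto simp: t odd_hyp_coeff_def fun_eq_iff power_mult_distrib power_add divide_simps)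
  finally have "(\<lambda>i. ?f (i + j)) sums odd_hyp_poly [t] x" .
  moreover have "?f i = 0" if "i < j" for i
    using that by (simp add: t odd_hyp_coeff_def)
  ultimately show ?thesis
    using sums_zero_iff_shift[of j ?f] by blast
qed

lemma odd_hyp_poly_sums: "(\<lambda>n. odd_hyp_coeff L n * x^n) sums odd_hyp_poly L x"
proof (induction L)
  case Nil
  have "odd_hyp_coeff [] = (\<lambda>n. 0)" by (auto simp: odd_hyp_coeff_def)
  then show ?case by (simp add: odd_hyp_poly_def)
next
  case (Cons t L)
  show ?case
    unfolding odd_hyp_coeff_Cons[of t L] odd_hyp_poly_Cons[of t L] distrib_right
    by (rule sums_add[OF odd_hyp_poly_single_sums Cons.IH])
qed

lemma odd_hyp_poly_pos:
  assumes "x > 0" "\<And>n. odd_hyp_coeff L n \<ge> 0" "odd_hyp_coeff L m > 0"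
  shows "odd_hyp_poly L x > 0"
proof -
  have "odd_hyp_poly L x = (\<Sum>n. odd_hyp_coeff L n * x^n)"
    using odd_hyp_poly_sums sums_unique by metis
  also have "\<dots> > 0"
    using assms odd_hyp_poly_sums[of L x] by (intro suminf_pos2[where i=m]) (auto simp: sums_iff)
  finally show ?thesis .
qed

lemma odd_hyp_coeff_mult_fact:
  assumes "odd n"
  shows "odd_hyp_coeff L n * fact n =
    (\<Sum>(j,k,a)\<leftarrow>L. if j \<le> n then a * k^(n-j) * pochhammer (of_nat (n-j) + 1) j else 0)"
proof -
  have "c / fact (n - j) * fact n = c * (pochhammer (of_nat (n-j) + 1) j :: real)" if "j \<le> n" for c j
    using fact_add_eq_fact_mult_pochhammer[of "n - j" j, where 'a=real] that by simp
  then show ?thesis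
    using assms unfolding odd_hyp_coeff_def by (induction L) (auto simp: distrib_right)
qed

lemma odd_hyp_coeff_nonneg:
  assumes "\<And>n. n < d \<Longrightarrow> odd_hyp_coeff L n \<ge> 0"
    and "\<And>m. odd (m + d) \<Longrightarrow> odd_hyp_coeff L (m + d) * fact (m + d) \<ge> 0"
  shows "odd_hyp_coeff L n \<ge> 0"
proof (cases "n < d")
  case False
  then obtain m where n: "n = m + d" by (metis add.commute le_Suc_ex not_less)
  show ?thesis
  proof (cases "odd n")
    case True
    then show ?thesis
      using assms(2)[of m] n fact_gt_zero[of "m + d", where 'a=real] by (auto simp: zero_le_mult_iff)
  qed (simp add: odd_hyp_coeff_def)
qed (use assms(1) in simp)

lemma sinh_triple: "sinh (3*x) = 3 * sinh x + 4 * sinh x ^ 3" for x :: real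
proof -
  have "sinh (3*x) = sinh (2*x + x)" by simp
  then show ?thesis
    unfolding sinh_add sinh_double cosh_double using cosh_square_eq[of x] by algebra
qed

lemma cosh_triple: "cosh (3*x) = 4 * cosh x ^ 3 - 3 * cosh x" for x :: real
proof -
  have "cosh (3*x) = cosh (2*x + x)" by simp
  then show ?thesis
    unfolding cosh_add sinh_double cosh_double using cosh_square_eq[of x] by algebra
qed

lemma sinh_quintuple: "sinh (5*x) = 5 * sinh x + 20 * sinh x ^ 3 + 16 * sinh x ^ 5" for x :: real
proof -
  have "sinh (5*x) = sinh (3*x + 2*x)" by simp
  then show ?thesis
    unfolding sinh_add sinh_triple cosh_triple sinh_double cosh_double
    using cosh_square_eq[of x] by algebra
qed

lemma cosh_quintuple: "cosh (5*x) = 16 * cosh x ^ 5 - 20 * cosh x ^ 3 + 5 * cosh x" for x :: real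
proof -
  have "cosh (5*x) = cosh (3*x + 2*x)" by simp
  then show ?thesis
    unfolding cosh_add sinh_triple cosh_triple sinh_double cosh_double
    using cosh_square_eq[of x] by algebra
qed

lemma x_less_cosh_mult_sinh:
  fixes x :: real
  assumes "x > 0"
  shows "x < cosh x * sinh x"
proof -
  let ?L = "[(0,2,1/2),(1,0,-1)]"
  have "odd_hyp_coeff ?L n \<ge> 0" for n
  proof (rule odd_hyp_coeff_nonneg[where d=1])
    show "odd (m + 1) \<Longrightarrow> odd_hyp_coeff ?L (m + 1) * fact (m + 1) \<ge> 0" for m
      by (subst odd_hyp_coeff_mult_fact) (auto simp: power_0_left)
  qed (simp add: odd_hyp_coeff_def)
  moreover have "odd_hyp_coeff ?L 3 > 0" by (simp add: odd_hyp_coeff_def fact_numeral)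
  ultimately have "odd_hyp_poly ?L x > 0" by (rule odd_hyp_poly_pos[OF assms])
  then show ?thesis using sinh_double[of x] by (simp add: odd_hyp_poly_def mult.commute)
qed

definition hyp_A :: "real \<Rightarrow> real" where
  "hyp_A x = 4*x + 3*x*sinh x^2 - 4*cosh x*sinh x"

lemma hyp_A_pos:
  assumes "x > 0"
  shows "hyp_A x > 0"
proof -
  let ?L = "[(1,0,5/2),(1,2,3/2),(0,2,-2)]"
  have "odd_hyp_coeff ?L n \<ge> 0" for n
  proof (rule odd_hyp_coeff_nonneg[where d=1])
    fix m :: nat
    assume odd: "odd (m + 1)"
    have "odd_hyp_coeff ?L (m + 1) * fact (m + 1) = 5/2 * 0^m * (m + 1) + 2^m * (3/2 * m - 5/2)"
      using odd by (subst odd_hyp_coeff_mult_fact) (simp_all add: algebra_simps)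
    moreover have "m = 0 \<or> m \<ge> 2" using odd by presburger
    ultimately show "odd_hyp_coeff ?L (m + 1) * fact (m + 1) \<ge> 0" by auto
  qed (simp add: odd_hyp_coeff_def)
  moreover have "odd_hyp_coeff ?L 3 > 0" by (simp add: odd_hyp_coeff_def fact_numeral)
  ultimately have "odd_hyp_poly ?L x > 0" by (rule odd_hyp_poly_pos[OF assms])
  moreover have "hyp_A x = odd_hyp_poly ?L x"
    unfolding hyp_A_def odd_hyp_poly_def
    using sinh_double[of x] cosh_double[of x] cosh_square_eq[of x] by (simp add: field_simps)
  ultimately show ?thesis by simp
qed

lemma cubic_le_pow3: "m \<ge> 4 \<Longrightarrow> 4 * (real m + 3)^3 + 3 \<le> 27 * 3^m"
proof (induction m rule: dec_induct)
  case (step m)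
  have "4 * (real (Suc m) + 3)^3 + 3 \<le> 3 * (4 * (real m + 3)^3 + 3)"
    by (simp add: algebra_simps power3_eq_cube)
  also have "\<dots> \<le> 27 * 3 ^ Suc m" using step.IH by simp
  finally show ?case .
qed simp

lemma lazarevic_inequality:
  fixes x :: real
  assumes "x > 0"
  shows "x^3 * cosh x < sinh x ^ 3"
proof -
  let ?L = "[(0,3,1/4),(0,1,-3/4),(3,1,-1)]"
  have "odd_hyp_coeff ?L n \<ge> 0" for n
  proof (rule odd_hyp_coeff_nonneg[where d=3])
    fix m :: nat
    assume odd: "odd (m + 3)"
    have "odd_hyp_coeff ?L (m + 3) * fact (m + 3) =
        1/4 * 3^(m+3) - 3/4 - (real m + 3) * (real m + 2) * (real m + 1)"
      using odd by (subst odd_hyp_coeff_mult_fact) (simp_all add: pochhammer_Suc numeral_3_eq_3 algebra_simps)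
    moreover have "(real m + 3) * (real m + 2) * (real m + 1) \<le> 1/4 * 3^(m+3) - 3/4"
    proof (cases "m \<ge> 4")
      case True
      have "(real m + 3) * (real m + 2) * (real m + 1) \<le> (real m + 3)^3"
        by (simp add: power3_eq_cube mult_mono)
      then show ?thesis using cubic_le_pow3[OF True] by (simp add: power_add)
    next
      case False
      then have "m = 0 \<or> m = 2" using odd by presburger
      then show ?thesis by auto
    qed
    ultimately show "odd_hyp_coeff ?L (m + 3) * fact (m + 3) \<ge> 0" by simp
  next
    show "n < 3 \<Longrightarrow> odd_hyp_coeff ?L n \<ge> 0" for n
      by (auto simp: odd_hyp_coeff_def numeral_3_eq_3 less_Suc_eq)
  qed
  moreover have "odd_hyp_coeff ?L 7 > 0" by (simp add: odd_hyp_coeff_def fact_numeral)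
  ultimately have "odd_hyp_poly ?L x > 0" by (rule odd_hyp_poly_pos[OF assms])
  then show ?thesis
    using sinh_triple[of x] by (simp add: odd_hyp_poly_def field_simps)
qed

text \<open>Up to the positive factor \<open>3 / (5 x sinh x A Q)\<close>, this is the derivative of \<open>G\<close>.\<close>

definition dG_numer :: "real \<Rightarrow> real" where
  "dG_numer x = 12 * (x * cosh x - sinh x) * hyp_A x * (cosh x * sinh x - x)
     + 5 * x * sinh x^2 * (2 * x^2 * cosh x - x * sinh x - cosh x * sinh x^2)"

definition dG_numer_terms :: "(nat \<times> real \<times> real) list" where
  "dG_numer_terms = [(0,5,3), (0,3,-3), (0,1,-6), (1,5,-89/16), (1,3,-309/16), (1,1,199/8),
     (2,5,9/4), (2,3,59/2), (2,1,177/4), (3,3,-13/2), (3,1,-83/2)]"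

lemma dG_numer_eq_odd_hyp_poly: "dG_numer x = odd_hyp_poly dG_numer_terms x"
  unfolding dG_numer_def hyp_A_def dG_numer_terms_def odd_hyp_poly_def
  using cosh_square_eq[of x]
  by (simp add: sinh_triple cosh_triple sinh_quintuple cosh_quintuple) algebra

definition dG_numer_coeff :: "nat \<Rightarrow> real" where
  "dG_numer_coeff m = (let n = real m + 3 in
      5^m * (375 - 2225/16 * n + 45/4 * n * (n - 1))
    + 3^m * (-81 - 2781/16 * n + 177/2 * n * (n - 1) - 13/2 * n * (n - 1) * (n - 2))
    + (-6 + 199/8 * n + 177/4 * n * (n - 1) - 83/2 * n * (n - 1) * (n - 2)))"

lemma odd_hyp_coeff_dG_numer_terms:
  assumes "even m"
  shows "odd_hyp_coeff dG_numer_terms (m + 3) * fact (m + 3) = dG_numer_coeff m"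
proof -
  have "odd (m + 3)" using assms by simp
  then show ?thesis
    unfolding dG_numer_terms_def dG_numer_coeff_def
    by (subst odd_hyp_coeff_mult_fact)
      (simp_all add: pochhammer_Suc numeral_3_eq_3 numeral_2_eq_2 power_add field_simps)
qed

lemma linear_mult_pow3_le_pow5: "m \<ge> 17 \<Longrightarrow> 49 * (real m + 3) * 3^m \<le> 3 * 5^m"
proof (induction m rule: dec_induct)
  case (step m)
  have "49 * (real (Suc m) + 3) * 3 ^ Suc m = 3 * (49 * (real m + 3) * 3^m) + 147 * 3^m"
    by (simp add: algebra_simps)
  also have "\<dots> \<le> 5 * (49 * (real m + 3) * 3^m)" by simp
  also have "\<dots> \<le> 3 * 5 ^ Suc m" using step.IH by (simp add: mult.commute)
  finally show ?case .
qed simp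

lemma dG_numer_coeff_nonneg_large:
  assumes "m \<ge> 17"
  shows "dG_numer_coeff m \<ge> 0"
proof -
  define n where "n = real m + 3"
  define t where "t = (5::real)^m"
  define u where "u = (3::real)^m"
  have n: "n \<ge> 20" using assms by (simp add: n_def)
  have u: "u \<ge> 1" by (simp add: u_def)
  have t: "49 * n * u \<le> 3 * t"
    using linear_mult_pow3_le_pow5[OF assms] by (simp add: n_def t_def u_def)
  have nn: "n * n \<ge> 20 * n" and nnn: "n * n * n \<ge> 20 * n * n"
    using n by (simp_all add: mult_right_mono)
  have five: "375 - 2225/16 * n + 45/4 * n * (n - 1) \<ge> 3 * n^2"
    using nn n by (simp add: field_simps power2_eq_square; linarith)
  have three: "-81 - 2781/16 * n + 177/2 * n * (n - 1) - 13/2 * n * (n - 1) * (n - 2) \<ge> -7 * n^3"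
    using nn nnn n by (simp add: field_simps power3_eq_cube; linarith)
  have one: "-6 + 199/8 * n + 177/4 * n * (n - 1) - 83/2 * n * (n - 1) * (n - 2) \<ge> -42 * n^3"
    using nn nnn n by (simp add: field_simps power3_eq_cube; linarith)
  have "42 * n \<le> 42 * n * u" using u n by simp
  then have "0 \<le> n^2 * (3 * t - 7 * n * u - 42 * n)" using t by simp
  also have "\<dots> = t * (3 * n^2) + u * (-7 * n^3) + (-42 * n^3)"
    by (simp add: algebra_simps power2_eq_square power3_eq_cube)
  also have "\<dots> \<le> dG_numer_coeff m"
    unfolding dG_numer_coeff_def Let_def n_def[symmetric] t_def[symmetric] u_def[symmetric]
    using five three one u by (intro add_mono mult_left_mono) (auto simp: t_def)
  finally show ?thesis .
qed

lemma dG_numer_coeff_nonneg: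
  assumes "even m"
  shows "dG_numer_coeff m \<ge> 0"
proof (cases "m < 17")
  case True
  have "\<forall>m \<in> set [0..<17]. even m \<longrightarrow> dG_numer_coeff m \<ge> 0"
    by (simp add: upt_rec dG_numer_coeff_def)
  then show ?thesis using True assms by simp
qed (simp add: dG_numer_coeff_nonneg_large)

lemma dG_numer_pos:
  assumes "x > 0"
  shows "dG_numer x > 0"
proof -
  have "odd_hyp_coeff dG_numer_terms n \<ge> 0" for n
  proof (rule odd_hyp_coeff_nonneg[where d=3])
    show "odd (m + 3) \<Longrightarrow> odd_hyp_coeff dG_numer_terms (m + 3) * fact (m + 3) \<ge> 0" for m
      by (simp add: odd_hyp_coeff_dG_numer_terms dG_numer_coeff_nonneg)
    show "n < 3 \<Longrightarrow> odd_hyp_coeff dG_numer_terms n \<ge> 0" for n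
      by (auto simp: odd_hyp_coeff_def dG_numer_terms_def numeral_3_eq_3 less_Suc_eq)
  qed
  moreover have "odd_hyp_coeff dG_numer_terms 11 > 0"
    by (simp add: odd_hyp_coeff_def dG_numer_terms_def fact_numeral)
  ultimately show ?thesis
    unfolding dG_numer_eq_odd_hyp_poly by (rule odd_hyp_poly_pos[OF assms])
qed

lemma pos_if_deriv_pos_tendsto_0:
  fixes f :: "real \<Rightarrow> real"
  assumes deriv: "\<And>x. x > 0 \<Longrightarrow> \<exists>D>0. (f has_real_derivative D) (at x)"
    and lim: "(f \<longlongrightarrow> 0) (at_right 0)"
    and "x > 0"
  shows "f x > 0"
proof -
  have mono: "f a < f b" if "0 < a" "a < b" for a b
  proof (rule DERIV_pos_imp_increasing[OF that(2)])
    fix t assume "a \<le> t" "t \<le> b"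
    then have "t > 0" using that by simp
    then show "\<exists>D. (f has_real_derivative D) (at t) \<and> 0 < D" using deriv by blast
  qed
  have "\<forall>\<^sub>F y in at_right 0. f y \<le> f (x/2)"
    using eventually_at_right_real[of 0 "x/2"] \<open>x > 0\<close>
    by (auto elim!: eventually_mono intro!: less_imp_le[OF mono])
  then have "0 \<le> f (x/2)"
    by (rule tendsto_upperbound[OF lim]) simp
  also have "f (x/2) < f x" using \<open>x > 0\<close> by (intro mono) auto
  finally show ?thesis .
qed

definition G :: "real \<Rightarrow> real" where
  "G x = 36/5 * ln (sinh x / x) - ln (2 * hyp_A x) + ln (cosh x * sinh x - x)"

lemma G_tendsto_0: "(G \<longlongrightarrow> 0) (at_right 0)"
  unfolding G_def[abs_def] hyp_A_def by real_asymp

lemma G_has_pos_deriv: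
  assumes x: "x > 0"
  shows "\<exists>D>0. (G has_real_derivative D) (at x)"
proof -
  define S C A Q where "S = sinh x" "C = cosh x" "A = hyp_A x" "Q = cosh x * sinh x - x"
  have pos: "S > 0" "A > 0" "Q > 0"
    using x hyp_A_pos[OF x] x_less_cosh_mult_sinh[OF x] by (simp_all add: S_C_A_Q_def)
  have pyth: "C^2 = 1 + S^2" using cosh_square_eq[of x] by (simp add: S_C_A_Q_def)
  define D where "D = 36/5 * ((x * C - S) / (x * S)) - (6 * x * S * C - 5 * S^2) / A + 2 * S^2 / Q"
  have dA: "(hyp_A has_real_derivative 6 * x * S * C - 5 * S^2) (at x)"
    unfolding hyp_A_def[abs_def] S_C_A_Q_def
    by (rule derivative_eq_intros refl)+
      (use cosh_square_eq[of x] in \<open>simp add: algebra_simps power2_eq_square\<close>)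
  have dQ: "((\<lambda>x. cosh x * sinh x - x) has_real_derivative 2 * S^2) (at x)"
    unfolding S_C_A_Q_def
    by (rule derivative_eq_intros refl)+
      (use cosh_square_eq[of x] in \<open>simp add: algebra_simps power2_eq_square\<close>)
  have dom: "0 < sinh x / x" "0 < 2 * hyp_A x" "0 < cosh x * sinh x - x" "x \<noteq> 0"
    using x pos by (simp_all add: S_C_A_Q_def)
  have "(G has_real_derivative D) (at x)"
    unfolding G_def[abs_def]
    by (rule dA dQ derivative_eq_intros refl | rule dom)+
      (use x pos in \<open>simp add: D_def S_C_A_Q_def field_simps\<close>)
  moreover have "D * (5 * x * S * A * Q) = 3 * dG_numer x"
  proof -
    have "D * (5 * x * S * A * Q) = 36 * (x * C - S) * A * Q - 5 * x * S * (6 * x * S * C - 5 * S^2) * Q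
        + 10 * x * S^3 * A"
      using x pos by (simp add: D_def field_simps power2_eq_square power3_eq_cube)
    also have "\<dots> = 3 * dG_numer x"
      using pyth unfolding dG_numer_def S_C_A_Q_def hyp_A_def by algebra
    finally show ?thesis .
  qed
  then have "D > 0"
    using x pos dG_numer_pos[OF x] by (metis zero_less_mult_pos2 mult_pos_pos zero_less_numeral)
  ultimately show ?thesis by blast
qed

lemma G_pos: "x > 0 \<Longrightarrow> G x > 0"
  using pos_if_deriv_pos_tendsto_0[OF G_has_pos_deriv G_tendsto_0] .

definition H :: "real \<Rightarrow> real" where
  "H x = 12/5 * ln (cosh x) + ln (2 + exp (36/5 * ln (sinh x / x))) - ln 3 - 48/5 * ln (sinh x / x)"

lemma H_tendsto_0: "(H \<longlongrightarrow> 0) (at_right 0)"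
  unfolding H_def[abs_def] by real_asymp

lemma two_hyp_A_less:
  assumes x: "x > 0"
  shows "2 * hyp_A x < exp (36/5 * ln (sinh x / x)) * (cosh x * sinh x - x)"
proof -
  have pos: "hyp_A x > 0" "cosh x * sinh x - x > 0"
    using hyp_A_pos[OF x] x_less_cosh_mult_sinh[OF x] by simp_all
  have "ln (2 * hyp_A x / (cosh x * sinh x - x)) < 36/5 * ln (sinh x / x)"
    using G_pos[OF x] pos by (simp add: G_def ln_div)
  then have "exp (ln (2 * hyp_A x / (cosh x * sinh x - x))) < exp (36/5 * ln (sinh x / x))"
    by (rule exp_less_mono)
  then show ?thesis
    using pos by (simp add: field_simps)
qed

lemma H_deriv_scaled_eq:
  fixes x S C Y :: real
  assumes "x > 0" "S > 0" "C > 0" "Y > 0" "C^2 = S^2 + 1"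
  defines "K \<equiv> (x * C - S) / (x * S)"
  shows "(12/5 * (S / C) + Y / (2 + Y) * (36/5 * K) - 48/5 * K) * (5 * x * S * C * (2 + Y))
    = 12 * (Y * (C * S - x) - 2 * (4 * x + 3 * x * S^2 - 4 * C * S))"
proof -
  define W where "W = 2 + Y"
  have W: "W > 0" using assms by (simp add: W_def)
  have "12/5 * (S / C) * (5 * x * S * C * W) = 12 * x * S^2 * W"
    using assms by (simp add: field_simps power2_eq_square)
  moreover have "Y / W * (36/5 * K) * (5 * x * S * C * W) = 36 * Y * C * (x * C - S)"
    using assms W by (simp add: K_def field_simps)
  moreover have "48/5 * K * (5 * x * S * C * W) = 48 * C * (x * C - S) * W"
    using assms by (simp add: K_def field_simps)
  ultimately have "(12/5 * (S / C) + Y / W * (36/5 * K) - 48/5 * K) * (5 * x * S * C * W) =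
      12 * x * S^2 * W + 36 * Y * C * (x * C - S) - 48 * C * (x * C - S) * W"
    by (simp only: left_diff_distrib distrib_right)
  also have "\<dots> = 12 * (Y * (C * S - x) - 2 * (4 * x + 3 * x * S^2 - 4 * C * S))"
    using assms(5) unfolding W_def by algebra
  finally show ?thesis by (simp add: W_def)
qed

lemma H_has_pos_deriv:
  assumes x: "x > 0"
  shows "\<exists>D>0. (H has_real_derivative D) (at x)"
proof -
  define S C Y where "S = sinh x" "C = cosh x" "Y = exp (36/5 * ln (sinh x / x))"
  define K where "K = (x * C - S) / (x * S)"
  define D where "D = 12/5 * (S / C) + Y / (2 + Y) * (36/5 * K) - 48/5 * K"
  have pos: "S > 0" "C > 0" "Y > 0"
    using x by (simp_all add: S_C_Y_def)
  have dom: "0 < sinh x / x" "0 < cosh x" "0 < 2 + exp (36/5 * ln (sinh x / x))" "x \<noteq> 0"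
    using x by (simp_all add: add_pos_pos)
  have dK: "1 / (sinh x / x) * ((cosh x * 1 * x - sinh x * 1) / (x * x)) = K"
    using x pos by (simp add: K_def S_C_Y_def field_simps)
  have deriv: "(H has_real_derivative D) (at x)"
    unfolding H_def[abs_def]
    apply (rule derivative_eq_intros refl | rule dom)+
    unfolding S_C_Y_def(3)[symmetric] dK by (simp add: D_def S_C_Y_def(1,2))
  have "D * (5 * x * S * C * (2 + Y)) = 12 * (Y * (cosh x * sinh x - x) - 2 * hyp_A x)"
    using H_deriv_scaled_eq[OF x pos cosh_square_eq[of x, unfolded S_C_Y_def(1,2)[symmetric]]]
    unfolding D_def K_def hyp_A_def S_C_Y_def(1,2) by (simp add: algebra_simps)
  moreover have "0 < Y * (cosh x * sinh x - x) - 2 * hyp_A x"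
    using two_hyp_A_less[OF x] by (simp add: S_C_Y_def)
  ultimately have "D > 0"
    using x pos by (metis zero_less_mult_pos2 mult_pos_pos add_pos_pos zero_less_numeral)
  with deriv show ?thesis by blast
qed

lemma H_pos: "x > 0 \<Longrightarrow> H x > 0"
  using pos_if_deriv_pos_tendsto_0[OF H_has_pos_deriv H_tendsto_0] .

lemma tanh_sinh_ineq_critical:
  fixes x :: real
  assumes x: "x > 0"
  shows "(tanh x / x) powr (12/5) < 2/3 * (x / sinh x) powr (3 * (12/5)) + 1/3"
proof -
  define s c Y where "s = sinh x / x" "c = cosh x" "Y = exp (36/5 * ln s)"
  have pos: "s > 0" "c > 0" "Y > 0" using x by (simp_all add: s_c_Y_def)
  have "3 * Y * (s / c) powr (12/5) = exp (ln 3) * exp (36/5 * ln s) * exp (12/5 * (ln s - ln c))"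
    using pos by (simp add: s_c_Y_def(3) powr_def ln_div)
  also have "\<dots> = exp (ln 3 + 48/5 * ln s - 12/5 * ln c)"
    by (simp only: exp_add[symmetric]) (rule arg_cong[where f = exp], simp add: field_simps)
  also have "\<dots> < exp (ln (2 + Y))"
    using H_pos[OF x] by (simp add: H_def s_c_Y_def)
  also have "\<dots> = 2 + Y" using pos by simp
  finally have key: "3 * Y * (s / c) powr (12/5) < 2 + Y" .
  have tanh: "tanh x / x = s / c" by (simp add: s_c_Y_def tanh_def)
  have sinh: "(x / sinh x) powr (3 * (12/5)) = inverse Y"
  proof -
    have "ln (x / sinh x) = - ln s" using x by (simp add: s_c_Y_def ln_div)
    then show ?thesis
      using x unfolding s_c_Y_def(3) powr_def by (simp add: exp_minus[symmetric])
  qed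
  have "(s / c) powr (12/5) < (2 + Y) / (3 * Y)" using key pos by (simp add: field_simps)
  also have "\<dots> = 2/3 * inverse Y + 1/3" using pos by (simp add: field_simps)
  finally show ?thesis unfolding tanh sinh .
qed

lemma tanh_sinh_ineq_ge_critical:
  fixes p x :: real
  assumes p: "p \<ge> 12/5" and x: "x > 0"
  shows "(tanh x / x) powr p < 2/3 * (x / sinh x) powr (3 * p) + 1/3"
proof -
  define t where "t = 5/12 * p"
  define B where "B = (x / sinh x) powr (3 * (12/5))"
  have t: "t \<ge> 1" using p by (simp add: t_def)
  have B: "B > 0" using x by (simp add: B_def)
  have "(tanh x / x) powr p = ((tanh x / x) powr (12/5)) powr t"
    by (simp add: t_def powr_powr)
  also have "\<dots> < (2/3 * B + 1/3) powr t"
    using tanh_sinh_ineq_critical[OF x] t by (intro powr_less_mono2) (auto simp: B_def)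
  also have "\<dots> \<le> 2/3 * B powr t + 1/3"
    using convex_onD[OF powr_convex[OF t], of "1/3" B 1] B by simp
  also have "B powr t = (x / sinh x) powr (3 * p)" by (simp add: B_def t_def powr_powr)
  finally show ?thesis .
qed

lemma tanh_sinh_ineq_neg:
  fixes p x :: real
  assumes p: "p < 0" and x: "x > 0"
  shows "(tanh x / x) powr p < 2/3 * (x / sinh x) powr (3 * p) + 1/3"
proof -
  have S: "sinh x > 0" using x by simp
  have lazarevic: "x^3 * cosh x < sinh x ^ 3" by (rule lazarevic_inequality[OF x])
  have "x^3 \<le> x^3 * cosh x" using x cosh_real_ge_1[of x] by simp
  then have "x < sinh x"
    using lazarevic S power_less_imp_less_base[of x 3 "sinh x"] by simp
  define v where "v = (x / sinh x) powr p"
  have v: "v > 1"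
    using \<open>x < sinh x\<close> x S p by (simp add: v_def powr_def mult_neg_neg)
  have "(x / sinh x)^2 \<le> tanh x / x"
    using lazarevic S x by (simp add: tanh_def power2_eq_square power3_eq_cube field_simps)
  then have "(tanh x / x) powr p \<le> ((x / sinh x)^2) powr p"
    using p x S by (intro powr_mono2') auto
  also have "((x / sinh x)^2) powr p = ((x / sinh x) powr 2) powr p"
    using x S by simp
  also have "\<dots> = v^2"
    using x S by (simp only: powr_powr) (simp add: v_def powr_power)
  also have "v^2 < 2/3 * v^3 + 1/3"
  proof -
    have "0 < (v - 1)^2 * (2 * v + 1)" using v by simp
    then show ?thesis by (simp add: algebra_simps power2_eq_square power3_eq_cube)
  qed
  also have "v^3 = (x / sinh x) powr (3 * p)"
    using x S by (simp add: v_def powr_power)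
  finally show ?thesis .
qed

lemma tanh_sinh_ineq_gap_asymp:
  "((\<lambda>x::real. (2/3 * (x / sinh x) powr (3 * p) + 1/3 - (tanh x / x) powr p) / x^4)
     \<longlongrightarrow> p * (p - 12/5) / 36) (at_right 0)"
  by real_asymp (simp add: field_simps)

lemma tanh_sinh_ineq_fails:
  fixes p :: real
  assumes "0 < p" "p < 12/5"
  shows "\<exists>x>0. \<not> (tanh x / x) powr p < 2/3 * (x / sinh x) powr (3 * p) + 1/3"
proof -
  have "p * (p - 12/5) / 36 < 0" using assms by (simp add: mult_pos_neg)
  then have "\<forall>\<^sub>F x in at_right 0.
      (2/3 * (x / sinh x) powr (3 * p) + 1/3 - (tanh x / x) powr p) / x^4 < 0 \<and> x > 0"
    using order_tendstoD(2)[OF tanh_sinh_ineq_gap_asymp] eventually_at_right_less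
    by (intro eventually_conj) auto
  then obtain x :: real where
    "(2/3 * (x / sinh x) powr (3 * p) + 1/3 - (tanh x / x) powr p) / x^4 < 0" "x > 0"
    using eventually_happens'[OF trivial_limit_at_right_real] by blast
  then show ?thesis by (auto simp: divide_less_0_iff)
qed

theorem proposition4p13:
  fixes p :: real
  assumes "p \<noteq> 0"
  shows "(\<forall>x::real. x > 0 \<longrightarrow>
            (tanh x / x) powr p < 2/3 * (x / sinh x) powr (3 * p) + 1/3)
         \<longleftrightarrow> (p < 0 \<or> p \<ge> 12/5)"
proof
  assume "\<forall>x::real. x > 0 \<longrightarrow> (tanh x / x) powr p < 2/3 * (x / sinh x) powr (3 * p) + 1/3"
  then show "p < 0 \<or> p \<ge> 12/5"
    using tanh_sinh_ineq_fails assms by (meson linorder_not_le linorder_neqE_linordered_idom)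
next
  assume "p < 0 \<or> p \<ge> 12/5"
  then show "\<forall>x::real. x > 0 \<longrightarrow> (tanh x / x) powr p < 2/3 * (x / sinh x) powr (3 * p) + 1/3"
    using tanh_sinh_ineq_neg tanh_sinh_ineq_ge_critical by blast
qed

end
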